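(* Let $\mathcal{SP}$ be the class of split graphs. Then: (i) $R_1^{\mathcal{SP}}(4,5)=7$ and $R_1^{\mathcal{SP}}(4,6)=8$; (ii) $R_2^{\mathcal{SP}}(6,7)=11$ and $R_2^{\mathcal{SP}}(6,8)=12$; (iii) $R_2^{\mathcal{SP}}(5,6)=8$ and $R_2^{\mathcal{SP}}(5,7)=9$; (iv) $R_2^{\mathcal{SP}}(5,j)=j+3$ for all integers $8\leq j\leq 12$.
   Context: All graphs are finite and simple. For a graph $G$ and a nonnegative integer $k$, a $k$-sparse $j$-set is a set of $j$ vertices of $G$ inducing a subgraph of maximum degree at most $k$; a $k$-dense $i$-set is a set of $i$ vertices of $G$ that is $k$-sparse in the complement of $G$. For a graph class $\mathcal{G}$, $R_k^{\mathcal{G}}(i,j)$ is the smallest natural number $n$ such that every graph on $n$ vertices in $\mathcal{G}$ has either a $k$-dense $i$-set or a $k$-sparse $j$-set. A split graph is a graph whose vertex set can be partitioned into a clique and an independent set. *)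

theory Defs
  imports Main
begin

definition simple_graph :: "'a set \<Rightarrow> ('a \<Rightarrow> 'a \<Rightarrow> bool) \<Rightarrow> bool" where
  "simple_graph V E \<longleftrightarrow> finite V \<and> (\<forall>u v. E u v \<longrightarrow> u \<in> V \<and> v \<in> V \<and> u \<noteq> v \<and> E v u)"

definition split_graph :: "'a set \<Rightarrow> ('a \<Rightarrow> 'a \<Rightarrow> bool) \<Rightarrow> bool" where
  "split_graph V E \<longleftrightarrow> (\<exists>K I. K \<union> I = V \<and> K \<inter> I = {} \<and>
      (\<forall>u\<in>K. \<forall>v\<in>K. u \<noteq> v \<longrightarrow> E u v) \<and>
      (\<forall>u\<in>I. \<forall>v\<in>I. \<not> E u v))"

definition k_sparse :: "('a \<Rightarrow> 'a \<Rightarrow> bool) \<Rightarrow> nat \<Rightarrow> 'a set \<Rightarrow> bool" where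
  "k_sparse E k S \<longleftrightarrow> (\<forall>v\<in>S. card {u\<in>S. E v u} \<le> k)"

definition compl_graph :: "('a \<Rightarrow> 'a \<Rightarrow> bool) \<Rightarrow> 'a \<Rightarrow> 'a \<Rightarrow> bool" where
  "compl_graph E u v \<longleftrightarrow> u \<noteq> v \<and> \<not> E u v"

definition k_dense :: "('a \<Rightarrow> 'a \<Rightarrow> bool) \<Rightarrow> nat \<Rightarrow> 'a set \<Rightarrow> bool" where
  "k_dense E k S \<longleftrightarrow> k_sparse (compl_graph E) k S"

definition R_split :: "nat \<Rightarrow> nat \<Rightarrow> nat \<Rightarrow> nat" where
  "R_split k i j = (LEAST n. \<forall>E :: nat \<Rightarrow> nat \<Rightarrow> bool.
      simple_graph {0..<n} E \<and> split_graph {0..<n} E \<longrightarrow>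
      (\<exists>S\<subseteq>{0..<n}. card S = i \<and> k_dense E k S) \<or>
      (\<exists>S\<subseteq>{0..<n}. card S = j \<and> k_sparse E k S))"

end

theory Submission
  imports Defs
begin

text \<open>Upper bounds: let K \<union> I be a split partition of a graph on i + j - 2 vertices with
  neither a k-dense i-set nor a k-sparse j-set. Then |K| = i - 1 and |I| = j - 1. No vertex of I
  has at most k non-neighbours in K, for otherwise it would extend K to a k-dense i-set; dually no
  vertex of K has at most k neighbours in I. Counting the edges between K and I from both sides
  gives (i - 1)(k + 1) \<le> (j - 1)(i - k - 2), which fails for the parameters of the theorem.
  For R_2(5,6) and R_2(5,7) only j + 2 vertices are available; then |K| \<in> {3, 4}, and the same
  count works once one also excludes extensions by two vertices, which leaves at most one
  exceptional vertex on the other side.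
  Lower bounds: explicit split graphs on one vertex fewer, a clique {0..<a} joined to an
  independent set by a few listed edges, in which every large set contains a vertex whose
  degree (or co-degree) inside the set is too large.\<close>

definition clique :: "('a \<Rightarrow> 'a \<Rightarrow> bool) \<Rightarrow> 'a set \<Rightarrow> bool" where
  "clique E K \<longleftrightarrow> (\<forall>u\<in>K. \<forall>v\<in>K. u \<noteq> v \<longrightarrow> E u v)"

definition indep_set :: "('a \<Rightarrow> 'a \<Rightarrow> bool) \<Rightarrow> 'a set \<Rightarrow> bool" where
  "indep_set E I \<longleftrightarrow> (\<forall>u\<in>I. \<forall>v\<in>I. \<not> E u v)"

lemma split_graph_iff:
  "split_graph V E \<longleftrightarrow> (\<exists>K I. K \<union> I = V \<and> K \<inter> I = {} \<and> clique E K \<and> indep_set E I)"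
  unfolding split_graph_def clique_def indep_set_def ..

lemma indep_set_compl_graph_iff [simp]: "indep_set (compl_graph E) K \<longleftrightarrow> clique E K"
  unfolding indep_set_def clique_def compl_graph_def by blast

lemma clique_compl_graph: "indep_set E I \<Longrightarrow> clique (compl_graph E) I"
  unfolding indep_set_def clique_def compl_graph_def by blast

lemma clique_subset: "clique E K \<Longrightarrow> S \<subseteq> K \<Longrightarrow> clique E S"
  unfolding clique_def by blast

lemma indep_set_subset: "indep_set E I \<Longrightarrow> S \<subseteq> I \<Longrightarrow> indep_set E S"
  unfolding indep_set_def by blast

lemma simple_graph_sym: "simple_graph V E \<Longrightarrow> E u v \<Longrightarrow> E v u"
  unfolding simple_graph_def by blast

lemma simple_graph_irrefl: "simple_graph V E \<Longrightarrow> \<not> E u u"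
  unfolding simple_graph_def by blast

lemma card_filter_partition:
  "finite A \<Longrightarrow> card {x\<in>A. P x} + card {x\<in>A. \<not> P x} = card A"
  using card_Int_Diff[of A "Collect P"] by (simp add: Int_def set_diff_eq conj_commute)

lemma indep_set_k_sparse: "indep_set E S \<Longrightarrow> k_sparse E k S"
  unfolding indep_set_def k_sparse_def by (simp cong: conj_cong)

lemma clique_k_dense: "clique E S \<Longrightarrow> k_dense E k S"
  unfolding k_dense_def by (simp add: indep_set_k_sparse)

lemma k_sparse_indep_set_Un:
  assumes "indep_set E I" "\<And>u. \<not> E u u" "finite I" "finite U" "card U \<le> k"
    and deg: "\<forall>u\<in>U. card U + card {w\<in>I. E u w} \<le> k + 1"
  shows "k_sparse E k (I \<union> U)"
  unfolding k_sparse_def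
proof
  fix x assume x: "x \<in> I \<union> U"
  show "card {y \<in> I \<union> U. E x y} \<le> k"
  proof (cases "x \<in> I")
    case True
    then have "{y \<in> I \<union> U. E x y} \<subseteq> U"
      using \<open>indep_set E I\<close> unfolding indep_set_def by blast
    then have "card {y \<in> I \<union> U. E x y} \<le> card U"
      by (rule card_mono[OF \<open>finite U\<close>])
    then show ?thesis
      using \<open>card U \<le> k\<close> by linarith
  next
    case False
    with x have "x \<in> U" by blast
    have "{y \<in> I \<union> U. E x y} \<subseteq> (U - {x}) \<union> {w\<in>I. E x w}"
      using \<open>\<And>u. \<not> E u u\<close> by blast
    then have "card {y \<in> I \<union> U. E x y} \<le> card ((U - {x}) \<union> {w\<in>I. E x w})"
      by (simp add: card_mono \<open>finite I\<close> \<open>finite U\<close>)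
    also have "\<dots> \<le> card (U - {x}) + card {w\<in>I. E x w}"
      by (rule card_Un_le)
    also have "\<dots> \<le> k"
      using deg \<open>x \<in> U\<close> \<open>finite U\<close> card_Diff_singleton[of x U] card_gt_0_iff[of U] by fastforce
    finally show ?thesis .
  qed
qed

lemma k_dense_clique_Un:
  assumes "clique E K" "finite K" "finite W" "card W \<le> k"
    and deg: "\<forall>w\<in>W. card W + card {v\<in>K. \<not> E w v} \<le> k + 1"
  shows "k_dense E k (K \<union> W)"
  unfolding k_dense_def
proof (rule k_sparse_indep_set_Un)
  show "\<forall>w\<in>W. card W + card {v\<in>K. compl_graph E w v} \<le> k + 1"
  proof
    fix w assume "w \<in> W"
    have "card {v\<in>K. compl_graph E w v} \<le> card {v\<in>K. \<not> E w v}"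
      by (rule card_mono) (auto simp: compl_graph_def \<open>finite K\<close>)
    then show "card W + card {v\<in>K. compl_graph E w v} \<le> k + 1"
      using deg \<open>w \<in> W\<close> by fastforce
  qed
qed (use assms in \<open>auto simp: compl_graph_def\<close>)

lemma sum_card_neighbours_swap:
  assumes "\<And>u v. E u v \<Longrightarrow> E v u" "finite A" "finite B"
  shows "(\<Sum>a\<in>A. card {b\<in>B. E a b}) = (\<Sum>b\<in>B. card {a\<in>A. E b a})"
proof -
  have "(\<Sum>a\<in>A. card {b\<in>B. E a b}) = (\<Sum>b\<in>B. card {a\<in>A. E a b})"
    using sum.swap_restrict[of A B "\<lambda>_ _. 1::nat" E] assms(2,3) by simp
  also have "\<dots> = (\<Sum>b\<in>B. card {a\<in>A. E b a})"
    using assms(1) by (intro sum.cong refl arg_cong[where f=card]) blast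
  finally show ?thesis .
qed

lemma card_mult_le_by_double_counting:
  assumes "\<And>u v. E u v \<Longrightarrow> E v u" "finite A" "finite B"
    and "\<forall>a\<in>A. p \<le> card {b\<in>B. E a b}" and "\<forall>b\<in>B. card {a\<in>A. E b a} \<le> q"
  shows "card A * p \<le> card B * q"
proof -
  have "card A * p \<le> (\<Sum>a\<in>A. card {b\<in>B. E a b})"
    using sum_bounded_below[of A p] assms(4) by simp
  also have "\<dots> = (\<Sum>b\<in>B. card {a\<in>A. E b a})"
    by (rule sum_card_neighbours_swap) (use assms in auto)
  also have "\<dots> \<le> card B * q"
    using sum_bounded_above[of B _ q] assms(5) by simp
  finally show ?thesis .
qed

section \<open>Critical split partitions\<close>

definition has_dense_or_sparse_set ::
    "('a \<Rightarrow> 'a \<Rightarrow> bool) \<Rightarrow> 'a set \<Rightarrow> nat \<Rightarrow> nat \<Rightarrow> nat \<Rightarrow> bool" where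
  "has_dense_or_sparse_set E V k i j \<longleftrightarrow>
     (\<exists>S\<subseteq>V. card S = i \<and> k_dense E k S) \<or> (\<exists>S\<subseteq>V. card S = j \<and> k_sparse E k S)"

lemma has_dense_or_sparse_setI:
  "S \<subseteq> V \<Longrightarrow> card S = i \<Longrightarrow> k_dense E k S \<Longrightarrow> has_dense_or_sparse_set E V k i j"
  "S \<subseteq> V \<Longrightarrow> card S = j \<Longrightarrow> k_sparse E k S \<Longrightarrow> has_dense_or_sparse_set E V k i j"
  unfolding has_dense_or_sparse_set_def by blast+

locale critical_split_partition =
  fixes V :: "'a set" and E :: "'a \<Rightarrow> 'a \<Rightarrow> bool" and k i j :: nat and K I :: "'a set"
  assumes simple: "simple_graph V E"
    and partition: "K \<union> I = V" "K \<inter> I = {}"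
    and clique: "clique E K" and indep: "indep_set E I"
    and no_witness: "\<not> has_dense_or_sparse_set E V k i j"
begin

lemma finite_parts: "finite K" "finite I"
  using simple partition(1) unfolding simple_graph_def by auto

lemma card_parts: "card K + card I = card V"
  using partition finite_parts by (metis card_Un_disjoint)

lemma card_K_less: "card K < i"
proof (rule ccontr)
  assume "\<not> card K < i"
  then obtain S where "S \<subseteq> K" "card S = i"
    by (meson not_less obtain_subset_with_card_n)
  then show False
    using no_witness partition clique_subset[OF clique] clique_k_dense has_dense_or_sparse_setI(1)
    by (metis Un_upper1 subset_trans)
qed

lemma card_I_less: "card I < j"
proof (rule ccontr)
  assume "\<not> card I < j"
  then obtain S where "S \<subseteq> I" "card S = j"
    by (meson not_less obtain_subset_with_card_n)
  then show False
    using no_witness partition indep_set_subset[OF indep] indep_set_k_sparse has_dense_or_sparse_setI(2)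
    by (metis Un_upper2 subset_trans)
qed

lemma no_dense_extension:
  assumes "W \<subseteq> I" "card W \<le> k" "card K + card W = i"
  shows "\<exists>w\<in>W. k + 1 < card W + card {v\<in>K. \<not> E w v}"
proof (rule ccontr)
  assume few: "\<not> ?thesis"
  have "finite W" using assms(1) finite_parts(2) finite_subset by blast
  have "K \<inter> W = {}"
    using assms(1) partition(2) by blast
  have "k_dense E k (K \<union> W)"
    using k_dense_clique_Un[OF clique finite_parts(1) \<open>finite W\<close> assms(2)] few
    by (simp add: not_less)
  moreover have "card (K \<union> W) = i"
    using assms(3) finite_parts \<open>finite W\<close> \<open>K \<inter> W = {}\<close>
    by (simp add: card_Un_disjoint)
  moreover have "K \<union> W \<subseteq> V"
    using assms(1) partition(1) by blast
  ultimately show False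
    using no_witness has_dense_or_sparse_setI(1) by blast
qed

lemma no_sparse_extension:
  assumes "U \<subseteq> K" "card U \<le> k" "card I + card U = j"
  shows "\<exists>u\<in>U. k + 1 < card U + card {w\<in>I. E u w}"
proof (rule ccontr)
  assume few: "\<not> ?thesis"
  have "finite U" using assms(1) finite_parts(1) finite_subset by blast
  have "I \<inter> U = {}"
    using assms(1) partition(2) by blast
  have "k_sparse E k (I \<union> U)"
    using k_sparse_indep_set_Un[OF indep simple_graph_irrefl[OF simple] finite_parts(2)
        \<open>finite U\<close> assms(2)] few
    by (simp add: not_less)
  moreover have "card (I \<union> U) = j"
    using assms(3) finite_parts \<open>finite U\<close> \<open>I \<inter> U = {}\<close>
    by (simp add: card_Un_disjoint)
  moreover have "I \<union> U \<subseteq> V"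
    using assms(1) partition(1) by blast
  ultimately show False
    using no_witness has_dense_or_sparse_setI(2) by blast
qed

lemma many_non_neighbours:
  assumes "1 \<le> k" "card K + 1 = i" "w \<in> I"
  shows "k + 1 \<le> card {v\<in>K. \<not> E w v}"
  using no_dense_extension[of "{w}"] assms by auto

lemma many_neighbours:
  assumes "1 \<le> k" "card I + 1 = j" "v \<in> K"
  shows "k + 1 \<le> card {w\<in>I. E v w}"
  using no_sparse_extension[of "{v}"] assms by auto

lemma parts_double_counting:
  assumes "A \<subseteq> K" "B \<subseteq> I"
    and "\<forall>a\<in>A. p \<le> card {b\<in>B. E a b}" "\<forall>b\<in>B. card {a\<in>A. E b a} \<le> q"
  shows "card A * p \<le> card B * q"
  using card_mult_le_by_double_counting[of E A B p q] assms finite_parts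
    simple_graph_sym[OF simple] finite_subset by blast

lemma neighbours_non_neighbours_in_K: "card {v\<in>K. E w v} + card {v\<in>K. \<not> E w v} = card K"
  by (rule card_filter_partition[OF finite_parts(1)])

end

lemma split_graph_critical_partition:
  assumes "simple_graph V E" "split_graph V E" "\<not> has_dense_or_sparse_set E V k i j"
  obtains K I where "critical_split_partition V E k i j K I"
  using assms unfolding split_graph_iff critical_split_partition_def by blast

lemma (in critical_split_partition) double_counting_bound:
  assumes "card V + 2 = i + j" "1 \<le> k" "k + 2 \<le> i"
  shows "(i - 1) * (k + 1) \<le> (j - 1) * (i - k - 2)"
proof -
  have card_K: "card K + 1 = i" and card_I: "card I + 1 = j"
    using assms(1) card_parts card_K_less card_I_less by linarith+
  have few_neighbours: "card {v\<in>K. E w v} \<le> i - k - 2" if "w \<in> I" for w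
    using many_non_neighbours[OF assms(2) card_K that] neighbours_non_neighbours_in_K[of w] card_K
    by linarith
  have "card K * (k + 1) \<le> card I * (i - k - 2)"
    by (rule parts_double_counting)
      (use many_neighbours[OF assms(2) card_I] few_neighbours in auto)
  moreover have "card K = i - 1" "card I = j - 1"
    using card_K card_I by linarith+
  ultimately show ?thesis
    by (metis mult.commute)
qed

lemma split_graph_has_dense_or_sparse_set:
  assumes "simple_graph V E" "split_graph V E"
    and "card V + 2 = i + j" "1 \<le> k" "k + 2 \<le> i"
    and "(j - 1) * (i - k - 2) < (i - 1) * (k + 1)"
  shows "has_dense_or_sparse_set E V k i j"
proof (rule ccontr)
  assume "\<not> ?thesis"
  with assms(1,2) obtain K I where "critical_split_partition V E k i j K I"
    by (rule split_graph_critical_partition)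
  then show False
    using critical_split_partition.double_counting_bound assms(3-6) by fastforce
qed

lemma critical_2_5_card_I_ge_6:
  assumes "critical_split_partition V E 2 5 j K I" "card V = j + 2" "card K = 4"
  shows "6 \<le> card I"
proof -
  interpret critical_split_partition V E 2 5 j K I by fact
  have card_I: "card I + 2 = j"
    using assms card_parts by linarith
  have few_neighbours: "card {v\<in>K. E w v} \<le> 1" if "w \<in> I" for w
    using many_non_neighbours[of w] neighbours_non_neighbours_in_K[of w] assms(3) that by linarith
  define T where "T = {v\<in>K. card {w\<in>I. E v w} \<le> 1}"
  have "finite T"
    unfolding T_def using finite_parts(1) by simp
  have "u = v" if uv: "u \<in> T" "v \<in> T" for u v
  proof (rule ccontr)
    assume "u \<noteq> v"
    then obtain x where "x \<in> {u, v}" "3 < 2 + card {w\<in>I. E x w}"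
      using no_sparse_extension[of "{u, v}"] uv card_I by (auto simp: T_def)
    then show False
      using uv by (auto simp: T_def)
  qed
  then have "card T \<le> 1"
    using card_le_Suc0_iff_eq[OF \<open>finite T\<close>] by auto
  have "card (K - T) * 2 \<le> card I * 1"
  proof (rule parts_double_counting)
    show "\<forall>b\<in>I. card {a\<in>K - T. E b a} \<le> 1"
    proof
      fix b assume "b \<in> I"
      have "card {a\<in>K - T. E b a} \<le> card {a\<in>K. E b a}"
        by (rule card_mono) (use finite_parts in auto)
      then show "card {a\<in>K - T. E b a} \<le> 1"
        using few_neighbours[OF \<open>b \<in> I\<close>] by linarith
    qed
  qed (auto simp: T_def)
  moreover have "card (K - T) = card K - card T"
    using \<open>finite T\<close> by (simp add: T_def card_Diff_subset)
  ultimately show ?thesis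
    using assms(3) \<open>card T \<le> 1\<close> by linarith
qed

lemma critical_2_5_card_I_ge_7:
  assumes "critical_split_partition V E 2 5 j K I" "card V = j + 2" "card K = 3"
  shows "7 \<le> card I"
proof -
  interpret critical_split_partition V E 2 5 j K I by fact
  have card_I: "card I + 1 = j"
    using assms card_parts by linarith
  define T where "T = {w\<in>I. card {v\<in>K. \<not> E w v} \<le> 1}"
  have "finite T"
    unfolding T_def using finite_parts(2) by simp
  have "u = w" if uw: "u \<in> T" "w \<in> T" for u w
  proof (rule ccontr)
    assume "u \<noteq> w"
    then obtain x where "x \<in> {u, w}" "3 < 2 + card {v\<in>K. \<not> E x v}"
      using no_dense_extension[of "{u, w}"] uw assms(3) by (auto simp: T_def)
    then show False
      using uw by (auto simp: T_def)
  qed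
  then have "card T \<le> 1"
    using card_le_Suc0_iff_eq[OF \<open>finite T\<close>] by auto
  have "card K * (3 - card T) \<le> card (I - T) * 1"
  proof (rule parts_double_counting)
    show "\<forall>a\<in>K. 3 - card T \<le> card {b\<in>I - T. E a b}"
    proof
      fix a assume "a \<in> K"
      have "card {b\<in>I. E a b} \<le> card ({b\<in>I - T. E a b} \<union> T)"
        by (rule card_mono) (use finite_parts \<open>finite T\<close> in auto)
      also have "\<dots> \<le> card {b\<in>I - T. E a b} + card T"
        by (rule card_Un_le)
      finally show "3 - card T \<le> card {b\<in>I - T. E a b}"
        using many_neighbours[of a] card_I \<open>a \<in> K\<close> by linarith
    qed
    show "\<forall>b\<in>I - T. card {a\<in>K. E b a} \<le> 1"
    proof
      fix b assume "b \<in> I - T"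
      then have "1 < card {v\<in>K. \<not> E b v}"
        by (auto simp: T_def)
      then show "card {a\<in>K. E b a} \<le> 1"
        using neighbours_non_neighbours_in_K[of b] assms(3) by linarith
    qed
  qed auto
  moreover have "card (I - T) = card I - card T"
    using \<open>finite T\<close> by (simp add: T_def card_Diff_subset)
  moreover have "card T = 0 \<or> card T = 1"
    using \<open>card T \<le> 1\<close> by linarith
  ultimately show ?thesis
    using assms(3) by auto
qed

lemma split_graph_has_2_dense_5_set_or_2_sparse_set:
  assumes "simple_graph V E" "split_graph V E" "card V = j + 2" "j \<le> 7"
  shows "has_dense_or_sparse_set E V 2 5 j"
proof (rule ccontr)
  assume "\<not> ?thesis"
  with assms(1,2) obtain K I where crit: "critical_split_partition V E 2 5 j K I"
    by (rule split_graph_critical_partition)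
  then interpret critical_split_partition V E 2 5 j K I .
  have "card K = 3 \<or> card K = 4"
    using card_K_less card_I_less card_parts assms(3) by linarith
  then show False
    using critical_2_5_card_I_ge_6[OF crit] critical_2_5_card_I_ge_7[OF crit]
      card_parts assms(3,4) by fastforce
qed

definition split_ramsey :: "nat \<Rightarrow> nat \<Rightarrow> nat \<Rightarrow> nat \<Rightarrow> bool" where
  "split_ramsey k i j n \<longleftrightarrow> (\<forall>E :: nat \<Rightarrow> nat \<Rightarrow> bool.
      simple_graph {0..<n} E \<and> split_graph {0..<n} E \<longrightarrow> has_dense_or_sparse_set E {0..<n} k i j)"

lemma R_split_eq_Least: "R_split k i j = (LEAST n. split_ramsey k i j n)"
  unfolding R_split_def split_ramsey_def has_dense_or_sparse_set_def ..

definition induced_graph :: "('a \<Rightarrow> 'a \<Rightarrow> bool) \<Rightarrow> 'a set \<Rightarrow> 'a \<Rightarrow> 'a \<Rightarrow> bool" where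
  "induced_graph E W u v \<longleftrightarrow> E u v \<and> u \<in> W \<and> v \<in> W"

lemma simple_graph_induced_graph:
  "simple_graph V E \<Longrightarrow> W \<subseteq> V \<Longrightarrow> simple_graph W (induced_graph E W)"
  unfolding simple_graph_def induced_graph_def by (auto intro: finite_subset)

lemma split_graph_induced_graph:
  assumes "split_graph V E" "W \<subseteq> V"
  shows "split_graph W (induced_graph E W)"
proof -
  obtain K I where "K \<union> I = V" "K \<inter> I = {}" "clique E K" "indep_set E I"
    using assms(1) by (auto simp: split_graph_iff)
  then show ?thesis
    unfolding split_graph_iff using assms(2)
    by (intro exI[of _ "K \<inter> W"] exI[of _ "I \<inter> W"])
      (auto simp: clique_def indep_set_def induced_graph_def)
qed

lemma k_sparse_cong:
  assumes "\<And>u v. u \<in> S \<Longrightarrow> v \<in> S \<Longrightarrow> E u v = E' u v"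
  shows "k_sparse E k S = k_sparse E' k S"
proof -
  have "{u\<in>S. E v u} = {u\<in>S. E' v u}" if "v \<in> S" for v
    using assms that by blast
  then show ?thesis
    unfolding k_sparse_def by auto
qed

lemma k_dense_cong:
  assumes "\<And>u v. u \<in> S \<Longrightarrow> v \<in> S \<Longrightarrow> E u v = E' u v"
  shows "k_dense E k S = k_dense E' k S"
  unfolding k_dense_def by (rule k_sparse_cong) (simp add: compl_graph_def assms)

lemma has_dense_or_sparse_set_induced_graph:
  assumes "has_dense_or_sparse_set (induced_graph E W) W k i j" "W \<subseteq> V"
  shows "has_dense_or_sparse_set E V k i j"
proof -
  have same_edges: "induced_graph E W u v = E u v" if "u \<in> W" "v \<in> W" for u v
    using that unfolding induced_graph_def by blast
  have "k_dense (induced_graph E W) k S = k_dense E k S" if "S \<subseteq> W" for S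
    by (rule k_dense_cong, rule same_edges) (use that in auto)
  moreover have "k_sparse (induced_graph E W) k S = k_sparse E k S" if "S \<subseteq> W" for S
    by (rule k_sparse_cong, rule same_edges) (use that in auto)
  ultimately show ?thesis
    using assms has_dense_or_sparse_setI[where V=V] unfolding has_dense_or_sparse_set_def
    by (metis subset_trans)
qed

lemma split_ramsey_mono:
  assumes "split_ramsey k i j m" "m \<le> n"
  shows "split_ramsey k i j n"
  unfolding split_ramsey_def
proof (intro allI impI)
  fix E assume "simple_graph {0..<n} E \<and> split_graph {0..<n} E"
  moreover have sub: "{0..<m} \<subseteq> {0..<n}"
    using assms(2) by auto
  ultimately have "has_dense_or_sparse_set (induced_graph E {0..<m}) {0..<m} k i j"
    using assms(1) simple_graph_induced_graph split_graph_induced_graph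
    unfolding split_ramsey_def by blast
  then show "has_dense_or_sparse_set E {0..<n} k i j"
    using has_dense_or_sparse_set_induced_graph sub by blast
qed

lemma R_split_eqI:
  assumes "split_ramsey k i j n" "\<not> split_ramsey k i j m" "n = Suc m"
  shows "R_split k i j = n"
  unfolding R_split_eq_Least
proof (rule Least_equality)
  show "split_ramsey k i j n" by fact
  show "n \<le> n'" if "split_ramsey k i j n'" for n'
    using split_ramsey_mono[OF that, of m] assms(2,3) by linarith
qed

lemma split_ramsey_by_double_counting:
  assumes "n + 2 = i + j" "1 \<le> k" "k + 2 \<le> i"
    and "(j - 1) * (i - k - 2) < (i - 1) * (k + 1)"
  shows "split_ramsey k i j n"
  unfolding split_ramsey_def
proof (intro allI impI)
  fix E :: "nat \<Rightarrow> nat \<Rightarrow> bool"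
  assume "simple_graph {0..<n} E \<and> split_graph {0..<n} E"
  then show "has_dense_or_sparse_set E {0..<n} k i j"
    by (intro split_graph_has_dense_or_sparse_set) (use assms in auto)
qed

lemma split_ramsey_2_5: "j \<le> 7 \<Longrightarrow> split_ramsey 2 5 j (j + 2)"
  unfolding split_ramsey_def
  by (auto intro: split_graph_has_2_dense_5_set_or_2_sparse_set)

section \<open>Lower-bound constructions\<close>

lemma clique_vertex_degree_ge:
  assumes "clique E K" "finite S" "finite I" "K \<inter> I = {}" "v \<in> S \<inter> K"
  shows "card (S \<inter> K) + card {w\<in>I. E v w} \<le> card {u\<in>S. E v u} + card (I - S) + 1"
proof -
  let ?N = "{w\<in>I. E v w}"
  have "card ?N \<le> card (S \<inter> ?N \<union> (I - S))"
    by (rule card_mono) (use assms(3) in auto)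
  also have "\<dots> \<le> card (S \<inter> ?N) + card (I - S)"
    by (rule card_Un_le)
  finally have N_bound: "card ?N \<le> card (S \<inter> ?N) + card (I - S)" .
  have "card (S \<inter> K - {v}) + card (S \<inter> ?N) = card ((S \<inter> K - {v}) \<union> (S \<inter> ?N))"
    using assms(2,4) by (subst card_Un_disjoint) auto
  also have "\<dots> \<le> card {u\<in>S. E v u}"
    using assms(1,2,5) unfolding clique_def by (intro card_mono) auto
  finally have "card (S \<inter> K - {v}) + card (S \<inter> ?N) \<le> card {u\<in>S. E v u}" .
  moreover have "card (S \<inter> K - {v}) + 1 = card (S \<inter> K)"
    using card_Suc_Diff1[of "S \<inter> K" v] assms(2,5) by (metis Suc_eq_plus1 finite_Int)
  ultimately show ?thesis
    using N_bound by linarith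
qed

lemma clique_not_k_sparse:
  assumes "clique E K" "finite K" "finite I" "K \<inter> I = {}" "S \<subseteq> K \<union> I" "card S = j"
    and few_exceptions: "card (K \<inter> X) + card I < j"
    and many_neighbours: "\<forall>v\<in>K - X. k + card I + 1 < card {w\<in>I. E v w} + j"
  shows "\<not> k_sparse E k S"
proof
  assume sparse: "k_sparse E k S"
  have "finite S"
    using assms(2,3,5) finite_subset by blast
  have "S - K = S \<inter> I"
    using assms(4,5) by blast
  then have card_S: "card (S \<inter> K) + card (S \<inter> I) = j"
    using card_Int_Diff[OF \<open>finite S\<close>, of K] assms(6) by simp
  moreover have card_I: "card I = card (S \<inter> I) + card (I - S)"
    using card_Int_Diff[OF assms(3), of S] by (simp add: Int_commute)
  ultimately have "\<not> S \<inter> K \<subseteq> K \<inter> X"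
    using card_mono[of "K \<inter> X" "S \<inter> K"] assms(2) few_exceptions by fastforce
  then obtain v where v: "v \<in> S \<inter> K" "v \<notin> X"
    by blast
  have "card {u\<in>S. E v u} \<le> k"
    using sparse v(1) unfolding k_sparse_def by blast
  moreover have "k + card I + 1 < card {w\<in>I. E v w} + j"
    using many_neighbours v by blast
  ultimately show False
    using clique_vertex_degree_ge[OF assms(1) \<open>finite S\<close> assms(3,4) v(1)] card_S card_I
    by linarith
qed

lemma indep_set_not_k_dense:
  assumes "indep_set E I" "finite K" "finite I" "K \<inter> I = {}" "S \<subseteq> K \<union> I" "card S = i"
    and "card (I \<inter> Y) + card K < i"
    and "\<forall>w\<in>I - Y. k + card K + 1 < card {v\<in>K. \<not> E w v} + i"
  shows "\<not> k_dense E k S"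
proof -
  have "{v\<in>K. compl_graph E w v} = {v\<in>K. \<not> E w v}" if "w \<in> I" for w
    using that assms(4) unfolding compl_graph_def by blast
  then have "\<not> k_sparse (compl_graph E) k S"
    using assms by (intro clique_not_k_sparse[where K = I and I = K and X = Y])
      (auto simp: clique_compl_graph)
  then show ?thesis
    unfolding k_dense_def .
qed

definition cross_graph :: "nat \<Rightarrow> (nat \<times> nat) list \<Rightarrow> nat \<Rightarrow> nat \<Rightarrow> bool" where
  "cross_graph a L u v \<longleftrightarrow> (u < a \<and> v < a \<and> u \<noteq> v) \<or> (u, v) \<in> set L \<or> (v, u) \<in> set L"

lemma card_filter_atLeastLessThan: "card {x\<in>{a..<b}. P x} = length (filter P [a..<b])"
proof -
  have "{x\<in>{a..<b}. P x} = set (filter P [a..<b])"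
    by auto
  then show ?thesis
    by (metis distinct_card distinct_filter distinct_upt)
qed

text \<open>X and Y list the exceptional vertices of the clique and of the independent set. The
  hypotheses are phrased over lists so that simp can check them by evaluation.\<close>

lemma not_split_ramsey_cross_graph:
  assumes edges: "\<forall>(u, w)\<in>set L. u < a \<and> a \<le> w \<and> w < m" and "a \<le> m"
    and "length X + m < j + a"
    and "\<forall>v\<in>set [0..<a]. v \<notin> set X \<longrightarrow>
           k + (m - a) + 1 < length (filter (cross_graph a L v) [a..<m]) + j"
    and "length Y + a < i"
    and "\<forall>w\<in>set [a..<m]. w \<notin> set Y \<longrightarrow>
           k + a + 1 < length (filter (\<lambda>v. \<not> cross_graph a L w v) [0..<a]) + i"
  shows "\<not> split_ramsey k i j m"
proof -
  let ?E = "cross_graph a L" and ?K = "{0..<a}" and ?I = "{a..<m}"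
  have partition: "?K \<union> ?I = {0..<m}" "?K \<inter> ?I = {}"
    using \<open>a \<le> m\<close> by auto
  have clique: "clique ?E ?K"
    unfolding clique_def cross_graph_def by auto
  have indep: "indep_set ?E ?I"
    using edges unfolding indep_set_def cross_graph_def by fastforce
  have "simple_graph {0..<m} ?E"
    using edges \<open>a \<le> m\<close> unfolding simple_graph_def cross_graph_def by fastforce
  moreover have "split_graph {0..<m} ?E"
    unfolding split_graph_iff using partition clique indep by blast
  moreover have "\<not> k_sparse ?E k S" if "S \<subseteq> {0..<m}" "card S = j" for S
  proof (rule clique_not_k_sparse[OF clique _ _ partition(2), where X = "set X"])
    show "card (?K \<inter> set X) + card ?I < j"
    proof -
      have "card (?K \<inter> set X) \<le> length X"
        using card_mono[of "set X" "?K \<inter> set X"] card_length[of X] by simp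
      then show ?thesis
        using assms(3) \<open>a \<le> m\<close> by simp
    qed
    show "\<forall>v\<in>?K - set X. k + card ?I + 1 < card {w\<in>?I. ?E v w} + j"
      unfolding card_filter_atLeastLessThan using assms(4) by simp
  qed (use that partition in auto)
  moreover have "\<not> k_dense ?E k S" if "S \<subseteq> {0..<m}" "card S = i" for S
  proof (rule indep_set_not_k_dense[OF indep _ _ partition(2), where Y = "set Y"])
    show "card (?I \<inter> set Y) + card ?K < i"
    proof -
      have "card (?I \<inter> set Y) \<le> length Y"
        using card_mono[of "set Y" "?I \<inter> set Y"] card_length[of Y] by simp
      then show ?thesis
        using assms(5) \<open>a \<le> m\<close> by simp
    qed
    show "\<forall>w\<in>?I - set Y. k + card ?K + 1 < card {v\<in>?K. \<not> ?E w v} + i"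
      unfolding card_filter_atLeastLessThan using assms(6) by simp
  qed (use that partition in auto)
  ultimately show ?thesis
    unfolding split_ramsey_def has_dense_or_sparse_set_def by blast
qed

lemma not_split_ramsey_1_4_5_6: "\<not> split_ramsey 1 4 5 6"
  by (rule not_split_ramsey_cross_graph[where a = 2 and L = "[(0,3), (1,4), (0,5), (1,5)]"
        and X = "[]" and Y = "[5]"])
    (simp_all add: cross_graph_def upt_rec)

lemma not_split_ramsey_1_4_6_7: "\<not> split_ramsey 1 4 6 7"
  by (rule not_split_ramsey_cross_graph[where a = 2 and L = "[(0,4), (1,5), (0,6), (1,6)]"
        and X = "[]" and Y = "[6]"])
    (simp_all add: cross_graph_def upt_rec)

lemma not_split_ramsey_2_6_7_10: "\<not> split_ramsey 2 6 7 10"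
  by (rule not_split_ramsey_cross_graph[where a = 4
        and L = "[(0,5), (1,5), (0,6), (1,6), (2,7), (3,7), (2,8), (3,8), (0,9), (1,9), (2,9), (3,9)]"
        and X = "[]" and Y = "[9]"])
    (simp_all add: cross_graph_def upt_rec)

lemma not_split_ramsey_2_6_8_11: "\<not> split_ramsey 2 6 8 11"
  by (rule not_split_ramsey_cross_graph[where a = 4
        and L = "[(0,6), (1,6), (0,7), (1,7), (2,8), (3,8), (2,9), (3,9), (0,10), (1,10), (2,10), (3,10)]"
        and X = "[]" and Y = "[10]"])
    (simp_all add: cross_graph_def upt_rec)

lemma not_split_ramsey_2_5_6_7: "\<not> split_ramsey 2 5 6 7"
  by (rule not_split_ramsey_cross_graph[where a = 2
        and L = "[(0,3), (1,4), (0,5), (1,5), (0,6), (1,6)]" and X = "[]" and Y = "[5, 6]"])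
    (simp_all add: cross_graph_def upt_rec)

lemma not_split_ramsey_2_5_7_8: "\<not> split_ramsey 2 5 7 8"
  by (rule not_split_ramsey_cross_graph[where a = 2
        and L = "[(0,4), (1,5), (0,6), (1,6), (0,7), (1,7)]" and X = "[]" and Y = "[6, 7]"])
    (simp_all add: cross_graph_def upt_rec)

lemma not_split_ramsey_2_5:
  assumes "8 \<le> j" "j \<le> 12"
  shows "\<not> split_ramsey 2 5 j (j + 2)"
proof -
  from assms consider "j = 8" | "j = 9" | "j = 10" | "j = 11" | "j = 12"
    by linarith
  then show ?thesis
    by cases
      (rule not_split_ramsey_cross_graph[where a = 4
          and L = "[(0,4), (0,5), (1,6), (1,7), (2,8), (2,9)]" and X = "[3]" and Y = "[]"];
        simp add: cross_graph_def upt_rec)+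
qed

theorem theorem6p4:
  shows "(R_split 1 4 5 = 7 \<and> R_split 1 4 6 = 8) \<and>
         (R_split 2 6 7 = 11 \<and> R_split 2 6 8 = 12) \<and>
         (R_split 2 5 6 = 8 \<and> R_split 2 5 7 = 9) \<and>
         (\<forall>j::nat. 8 \<le> j \<and> j \<le> 12 \<longrightarrow> R_split 2 5 j = j + 3)"
proof -
  have "R_split 1 4 5 = 7"
    by (rule R_split_eqI[OF split_ramsey_by_double_counting not_split_ramsey_1_4_5_6]) simp_all
  moreover have "R_split 1 4 6 = 8"
    by (rule R_split_eqI[OF split_ramsey_by_double_counting not_split_ramsey_1_4_6_7]) simp_all
  moreover have "R_split 2 6 7 = 11"
    by (rule R_split_eqI[OF split_ramsey_by_double_counting not_split_ramsey_2_6_7_10]) simp_all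
  moreover have "R_split 2 6 8 = 12"
    by (rule R_split_eqI[OF split_ramsey_by_double_counting not_split_ramsey_2_6_8_11]) simp_all
  moreover have "R_split 2 5 6 = 8" "R_split 2 5 7 = 9"
    using R_split_eqI[OF split_ramsey_2_5 not_split_ramsey_2_5_6_7]
      R_split_eqI[OF split_ramsey_2_5 not_split_ramsey_2_5_7_8] by simp_all
  moreover have "R_split 2 5 j = j + 3" if "8 \<le> j \<and> j \<le> 12" for j
    using that by (intro R_split_eqI[OF split_ramsey_by_double_counting not_split_ramsey_2_5]) auto
  ultimately show ?thesis
    by blast
qed

end
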